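(* For every integer $n\ge1$, \[ \mathrm{QEC}(K_1+P_n)=-\tilde\alpha_n-2, \] where $\tilde\alpha_n$ is the minimal root of $\Phi_n(x)=0$. If $n\ge2$ is even, then $\tilde\alpha_n=\min\mathrm{ev}(A_n)$ and \[ \mathrm{QEC}(K_1+P_n)=-\min\mathrm{ev}(A_n)-2=-4\sin^2\frac{\pi}{2(n+1)}. \] If $n\ge1$ is odd, then $\min\mathrm{ev}(A_{n+1})\le\tilde\alpha_n<\min\mathrm{ev}(A_n)$ and \[ -4\sin^2\frac{\pi}{2(n+1)}<\mathrm{QEC}(K_1+P_n)\le-4\sin^2\frac{\pi}{2(n+2)}. \]
   Context: For a finite connected graph $G=(V,E)$ with $|V|\ge2$ and distance matrix $D=[d(i,j)]_{i,j\in V}$ (graph distance), the quadratic embedding constant is $\mathrm{QEC}(G)=\max\{\langle f,Df\rangle : f\in\mathbb{R}^V,\ \langle f,f\rangle=1,\ \langle\mathbf 1,f\rangle=0\}$, where $\mathbf 1$ is the all-ones vector and $\langle\cdot,\cdot\rangle$ the standard inner product. The join $G_1+G_2$ of disjoint graphs has vertex set $V_1\cup V_2$ and edge set $E_1\cup E_2\cup\{\{x,y\}:x\in V_1,y\in V_2\}$. $K_1$ is the one-vertex graph and $P_n$ the path on $n$ vertices; $A_n$ is the adjacency matrix of $P_n$ and $\mathrm{ev}(A_n)$ its set of eigenvalues. $U_n$ is the Chebyshev polynomial of the second kind, $U_n(\cos\theta)=\sin((n+1)\theta)/\sin\theta$, and $\tilde U_n(x)=U_n(x/2)$. Define \[ \Phi_n(x)=((n+1)x^2-6x-4n)\tilde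 U_n(x)+2(x+2)\tilde U_{n-1}(x)+2(x+2). \] (All roots of $\Phi_n$ are real.) *)

theory Defs
  imports Complex_Main
begin

definition walk_of_len :: "'a set \<Rightarrow> ('a \<Rightarrow> 'a \<Rightarrow> bool) \<Rightarrow> nat \<Rightarrow> 'a \<Rightarrow> 'a \<Rightarrow> bool" where
  "walk_of_len V E k x y \<longleftrightarrow> (\<exists>p :: nat \<Rightarrow> 'a. p 0 = x \<and> p k = y \<and> (\<forall>i\<le>k. p i \<in> V) \<and>
      (\<forall>i<k. E (p i) (p (Suc i))))"

definition gdist :: "'a set \<Rightarrow> ('a \<Rightarrow> 'a \<Rightarrow> bool) \<Rightarrow> 'a \<Rightarrow> 'a \<Rightarrow> nat" where
  "gdist V E x y = (LEAST k. walk_of_len V E k x y)"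

text \<open>Quadratic embedding constant (the maximum is attained, so it equals the supremum).\<close>
definition QEC :: "'a set \<Rightarrow> ('a \<Rightarrow> 'a \<Rightarrow> bool) \<Rightarrow> real" where
  "QEC V E = Sup {(\<Sum>x\<in>V. \<Sum>y\<in>V. f x * real (gdist V E x y) * f y) | f :: 'a \<Rightarrow> real.
      (\<Sum>x\<in>V. (f x)\<^sup>2) = 1 \<and> (\<Sum>x\<in>V. f x) = 0}"

definition join_V :: "'a set \<Rightarrow> 'b set \<Rightarrow> ('a + 'b) set" where
  "join_V V1 V2 = Inl ` V1 \<union> Inr ` V2"

fun join_E :: "('a \<Rightarrow> 'a \<Rightarrow> bool) \<Rightarrow> ('b \<Rightarrow> 'b \<Rightarrow> bool) \<Rightarrow> ('a + 'b) \<Rightarrow> ('a + 'b) \<Rightarrow> bool" where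
  "join_E E1 E2 (Inl x) (Inl y) = E1 x y"
| "join_E E1 E2 (Inr x) (Inr y) = E2 x y"
| "join_E E1 E2 (Inl x) (Inr y) = True"
| "join_E E1 E2 (Inr x) (Inl y) = True"

definition K1_V :: "unit set" where "K1_V = {()}"
definition K1_E :: "unit \<Rightarrow> unit \<Rightarrow> bool" where "K1_E x y = False"

definition path_V :: "nat \<Rightarrow> nat set" where "path_V n = {1..n}"
definition path_E :: "nat \<Rightarrow> nat \<Rightarrow> bool" where "path_E i j \<longleftrightarrow> (i + 1 = j \<or> j + 1 = i)"

definition adjA :: "nat \<Rightarrow> nat \<Rightarrow> real" where
  "adjA i j = (if path_E i j then 1 else 0)"

definition evA :: "nat \<Rightarrow> real set" where
  "evA n = {mu. \<exists>v :: nat \<Rightarrow> real. (\<exists>i\<in>{1..n}. v i \<noteq> 0) \<and>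
      (\<forall>i\<in>{1..n}. (\<Sum>j\<in>{1..n}. adjA i j * v j) = mu * v i)}"

fun chebU :: "nat \<Rightarrow> real \<Rightarrow> real" where
  "chebU 0 x = 1"
| "chebU (Suc 0) x = 2 * x"
| "chebU (Suc (Suc n)) x = 2 * x * chebU (Suc n) x - chebU n x"

definition tildeU :: "nat \<Rightarrow> real \<Rightarrow> real" where
  "tildeU n x = chebU n (x / 2)"

definition Phi :: "nat \<Rightarrow> real \<Rightarrow> real" where
  "Phi n x = ((real n + 1) * x\<^sup>2 - 6 * x - 4 * real n) * tildeU n x
     + 2 * (x + 2) * tildeU (n - 1) x + 2 * (x + 2)"

definition alpha_tilde :: "nat \<Rightarrow> real" where
  "alpha_tilde n = Min {x. Phi n x = 0}"

end

theory Submission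
  imports Defs "HOL-Analysis.Analysis" "HOL-Computational_Algebra.Polynomial"
begin

text \<open>Write a zero-sum vector on \<open>K\<^sub>1 + P\<^sub>n\<close> as \<open>(-\<Sum>g, g)\<close> with \<open>g\<close> on the path. Path vertices
  are at distance \<open>2 - 2\<delta> - A\<^sub>n\<close>, so the distance form becomes \<open>-\<langle>g, (2I + A\<^sub>n) g\<rangle>\<close> and the
  norm \<open>\<langle>g, (I + J) g\<rangle>\<close>; hence \<open>QEC(K\<^sub>1 + P\<^sub>n) = -\<lambda>\<close> with \<open>\<lambda>\<close> the least value of the
  corresponding Rayleigh quotient. A minimiser satisfies \<open>g\<^sub>i\<^sub>-\<^sub>1 + g\<^sub>i\<^sub>+\<^sub>1 = (\<lambda> - 2) g\<^sub>i + \<lambda> \<Sum>g\<close>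
  with zero boundary values; solving this recurrence with Chebyshev polynomials leaves a
  homogeneous \<open>2 \<times> 2\<close> system for \<open>(g\<^sub>1, \<lambda> \<Sum>g)\<close> whose determinant times \<open>-(\<lambda> - 4)\<^sup>2\<close> is
  \<open>\<Phi>\<^sub>n(\<lambda> - 2)\<close>. Conversely a root \<open>x < -1\<close> of \<open>\<Phi>\<^sub>n\<close> yields a solution with Rayleigh quotient
  \<open>x + 2\<close>, and always \<open>\<lambda> \<le> 1\<close>, so \<open>\<lambda> - 2\<close> is the least root of \<open>\<Phi>\<^sub>n\<close>.

  The eigenvector \<open>(U\<^sub>k\<^sub>-\<^sub>1(\<mu>))\<^sub>k\<close> of \<open>A\<^sub>n\<close> at \<open>\<mu> = min ev(A\<^sub>n) = -2 cos(\<pi>/(n+1))\<close> has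
  coordinate sum zero exactly for even \<open>n\<close>; as a test vector it gives \<open>\<lambda> \<le> \<mu> + 2\<close>, strictly
  for odd \<open>n\<close>. For even \<open>n\<close>, \<open>\<Phi>\<^sub>n\<close> has no root below \<open>\<mu>\<close> (a sign argument using Cassini's
  identity); for odd \<open>n\<close> the lower bound comes from \<open>\<lambda>\<^sub>n\<^sub>+\<^sub>1 \<le> \<lambda>\<^sub>n\<close>.\<close>

section \<open>Chebyshev polynomials of the second kind\<close>

lemma tildeU_0 [simp]: "tildeU 0 x = 1"
  by (simp add: tildeU_def)

lemma tildeU_1 [simp]: "tildeU (Suc 0) x = x"
  by (simp add: tildeU_def)

lemma tildeU_Suc_Suc: "tildeU (Suc (Suc n)) x = x * tildeU (Suc n) x - tildeU n x"
  by (simp add: tildeU_def)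

lemma tildeU_cassini:
  "(tildeU (Suc k) x)\<^sup>2 + (tildeU k x)\<^sup>2 - x * tildeU (Suc k) x * tildeU k x = 1"
  by (induction k) (simp_all add: tildeU_Suc_Suc power2_eq_square algebra_simps)

lemma sin_mult_tildeU: "sin t * tildeU k (2 * cos t) = sin (real (Suc k) * t)"
proof (induction k rule: induct_nat_012)
  case 0
  then show ?case
    by simp
next
  case 1
  then show ?case
    using sin_double[of t] by (simp add: algebra_simps)
next
  case (ge2 k)
  have "sin (real (Suc (Suc (Suc k))) * t) + sin (real (Suc k) * t)
      = 2 * cos t * sin (real (Suc (Suc k)) * t)"
    using sin_add[of "real (Suc (Suc k)) * t" t] sin_diff[of "real (Suc (Suc k)) * t" t]
    by (simp add: algebra_simps)
  then show ?case
    using ge2 by (simp add: tildeU_Suc_Suc algebra_simps)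
qed

lemma tildeU_le_minus2:
  assumes "x \<le> -2"
  shows "real k + 1 \<le> (-1) ^ k * tildeU k x"
proof -
  have "real k + 1 \<le> (-1) ^ k * tildeU k x \<and>
        1 \<le> (-1) ^ Suc k * tildeU (Suc k) x - (-1) ^ k * tildeU k x"
  proof (induction k)
    case 0
    then show ?case
      using assms by simp
  next
    case (Suc k)
    define a where "a = (-1::real) ^ k * tildeU k x"
    define b where "b = (-1::real) ^ Suc k * tildeU (Suc k) x"
    have next_term: "(-1) ^ Suc (Suc k) * tildeU (Suc (Suc k)) x = - x * b - a"
      by (simp add: a_def b_def tildeU_Suc_Suc algebra_simps)
    have "real k + 1 \<le> a" "1 \<le> b - a"
      using Suc by (simp_all add: a_def b_def)
    moreover have "2 * b \<le> - x * b"
      using assms \<open>real k + 1 \<le> a\<close> \<open>1 \<le> b - a\<close> by (intro mult_right_mono) auto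
    ultimately show ?case
      unfolding next_term b_def[symmetric] by simp
  qed
  then show ?thesis ..
qed

definition USum :: "nat \<Rightarrow> real \<Rightarrow> real" where
  "USum k x = (\<Sum>j<k. tildeU j x)"

definition USum2 :: "nat \<Rightarrow> real \<Rightarrow> real" where
  "USum2 k x = (\<Sum>j<k. USum j x)"

lemma USum_0 [simp]: "USum 0 x = 0"
  by (simp add: USum_def)

lemma USum_1 [simp]: "USum (Suc 0) x = 1"
  by (simp add: USum_def)

lemma USum_Suc: "USum (Suc k) x = USum k x + tildeU k x"
  by (simp add: USum_def)

lemma USum_Suc_Suc: "USum (Suc (Suc k)) x = x * USum (Suc k) x - USum k x + 1"
  by (induction k) (simp_all add: USum_Suc tildeU_Suc_Suc algebra_simps)

lemma USum_closed_form: "(x - 2) * USum (Suc k) x = tildeU (Suc k) x - tildeU k x - 1"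
  by (induction k) (simp_all add: USum_Suc tildeU_Suc_Suc algebra_simps)

lemma USum2_closed_form: "(x - 2) * USum2 (Suc k) x = tildeU k x - (real k + 1)"
proof (induction k)
  case 0
  then show ?case
    by (simp add: USum2_def)
next
  case (Suc k)
  then show ?case
    using USum_closed_form[of x k] by (simp add: USum2_def algebra_simps)
qed

text \<open>The determinant of the linear system satisfied by \<open>(g 1, c)\<close> when \<open>g\<close> solves
  \<open>g (i-1) + g (i+1) = x g i + c\<close> on the path, vanishes at both ends and has
  \<open>c = (x + 2) \<Sum>g\<close>.\<close>
definition cheb_det :: "nat \<Rightarrow> real \<Rightarrow> real" where
  "cheb_det n x = tildeU n x * ((x + 2) * USum2 n x - 1) - (x + 2) * (USum n x)\<^sup>2"

lemma Phi_eq_cheb_det: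
  assumes "n \<ge> 1"
  shows "Phi n x = - ((x - 2)\<^sup>2 * cheb_det n x)"
proof -
  obtain m where n: "n = Suc m"
    using assms by (cases n) auto
  let ?u = "tildeU (Suc m) x" and ?v = "tildeU m x"
  have "(x - 2)\<^sup>2 * cheb_det (Suc m) x
      = ?u * ((x + 2) * ((x - 2) * USum2 (Suc m) x) * (x - 2) - (x - 2)\<^sup>2)
        - (x + 2) * ((x - 2) * USum (Suc m) x)\<^sup>2"
    by (simp add: cheb_det_def power2_eq_square algebra_simps)
  also have "\<dots> = ?u * ((x + 2) * (?v - (real m + 1)) * (x - 2) - (x - 2)\<^sup>2)
        - (x + 2) * (?u - ?v - 1)\<^sup>2"
    by (simp only: USum_closed_form USum2_closed_form)
  also have "\<dots> = - Phi (Suc m) x + (x + 2) * (1 - (?u\<^sup>2 + ?v\<^sup>2 - x * ?u * ?v))"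
    by (simp add: Phi_def power2_eq_square algebra_simps)
  finally show ?thesis
    by (simp add: n tildeU_cassini)
qed

section \<open>The least zero of \<open>tildeU\<close>\<close>

definition ev_min :: "nat \<Rightarrow> real" where
  "ev_min k = - 2 * cos (pi / (real k + 1))"

lemma ev_min_Suc_less: "ev_min (Suc k) < ev_min k"
proof -
  have "cos (pi / (real k + 1)) < cos (pi / (real (Suc k) + 1))"
    by (intro cos_monotone_0_pi) (auto simp: field_simps)
  then show ?thesis
    by (simp add: ev_min_def)
qed

lemma ev_min_gt_minus2: "-2 < ev_min k"
proof -
  have "cos (pi / (real k + 1)) < cos 0"
    by (intro cos_monotone_0_pi) (auto simp: field_simps)
  then show ?thesis
    by (simp add: ev_min_def)
qed

lemma ev_min_less_2:
  assumes "k \<ge> 1"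
  shows "ev_min k < 2"
proof -
  have "cos pi < cos (pi / (real k + 1))"
    using assms by (intro cos_monotone_0_pi) (auto simp: field_simps)
  then show ?thesis
    by (simp add: ev_min_def)
qed

lemma ev_min_2: "ev_min 2 = -1"
proof -
  have "pi / (real 2 + 1) = pi / 3"
    by simp
  then show ?thesis
    by (simp add: ev_min_def cos_60)
qed

lemma ev_min_eq_sin: "ev_min k + 2 = 4 * (sin (pi / (2 * (real k + 1))))\<^sup>2"
proof -
  define y where "y = pi / (2 * (real k + 1))"
  have "pi / (real k + 1) = 2 * y"
    by (simp add: y_def field_simps)
  then have "cos (pi / (real k + 1)) = 1 - 2 * (sin y)\<^sup>2"
    by (simp only: cos_double_sin)
  then show ?thesis
    unfolding ev_min_def y_def[symmetric] by simp
qed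

lemma ev_min_plus2_bound: "(ev_min k + 2) * (real k + 1)\<^sup>2 \<le> 10"
proof -
  define y where "y = pi / (2 * (real k + 1))"
  have "\<bar>sin y\<bar>\<^sup>2 \<le> \<bar>y\<bar>\<^sup>2"
    by (intro power_mono abs_sin_x_le_abs_x) auto
  then have "(ev_min k + 2) * (real k + 1)\<^sup>2 \<le> 4 * y\<^sup>2 * (real k + 1)\<^sup>2"
    unfolding ev_min_eq_sin y_def[symmetric] by (intro mult_right_mono) auto
  also have "\<dots> = (2 * (real k + 1) * y)\<^sup>2"
    by (simp add: power2_eq_square algebra_simps)
  also have "\<dots> = pi\<^sup>2"
    by (simp add: y_def)
  also have "\<dots> \<le> 10"
  proof -
    have "pi \<le> 3.16"
      using pi_approx by simp
    then have "pi * pi \<le> 3.16 * 3.16"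
      by (intro mult_mono) auto
    then show ?thesis
      by (simp add: power2_eq_square)
  qed
  finally show ?thesis .
qed

lemma tildeU_ev_min:
  assumes "k \<ge> 1"
  shows "tildeU k (ev_min k) = 0"
proof -
  define t where "t = real k * pi / (real k + 1)"
  have "t = pi - pi / (real k + 1)"
    by (simp add: t_def field_simps)
  then have "ev_min k = 2 * cos t"
    by (simp add: ev_min_def)
  moreover have "0 < sin t"
    using assms by (intro sin_gt_zero) (auto simp: t_def field_simps)
  moreover have "real (Suc k) * t = real k * pi"
    by (simp add: t_def field_simps)
  then have "sin t * tildeU k (2 * cos t) = 0"
    by (simp add: sin_mult_tildeU)
  ultimately show ?thesis
    by simp
qed

lemma minus_one_power_mult_sin_pos:
  assumes "real k * pi < y" "y < (real k + 1) * pi"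
  shows "0 < (-1) ^ k * sin y"
proof -
  have "sin y = sin (y - real k * pi) * (-1) ^ k"
    using sin_add[of "y - real k * pi" "real k * pi"] by (simp add: sin_npi cos_npi)
  then have "(-1) ^ k * sin y = sin (y - real k * pi)"
    by (metis minus_one_mult_self mult.left_commute mult.right_neutral)
  moreover have "0 < sin (y - real k * pi)"
    using assms by (intro sin_gt_zero) (auto simp: algebra_simps)
  ultimately show ?thesis
    by simp
qed

lemma tildeU_sign_below_ev_min:
  assumes "x < ev_min k"
  shows "0 < (-1) ^ k * tildeU k x"
proof (cases "x \<le> -2")
  case True
  then show ?thesis
    using tildeU_le_minus2[OF True, of k] of_nat_0_le_iff[of k] by linarith
next
  case False
  have "x < 2"
    using assms cos_ge_minus_one[of "pi / (real k + 1)"] unfolding ev_min_def by linarith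
  define t where "t = arccos (x / 2)"
  have t: "0 < t" "t < pi" "cos t = x / 2"
    using arccos_lt_bounded[of "x / 2"] cos_arccos[of "x / 2"] False \<open>x < 2\<close>
    by (auto simp: t_def)
  have "cos t < cos (pi - pi / (real k + 1))"
    using assms t by (simp add: ev_min_def)
  moreover have "0 \<le> pi - pi / (real k + 1)" "pi - pi / (real k + 1) \<le> pi"
    by (auto simp: field_simps)
  ultimately have "pi - pi / (real k + 1) < t"
    using t cos_mono_less_eq[of t "pi - pi / (real k + 1)"] by simp
  then have "real k * pi < real (Suc k) * t"
    by (simp add: field_simps)
  moreover have "real (Suc k) * t < (real k + 1) * pi"
    using mult_strict_left_mono[OF \<open>t < pi\<close>, of "real k + 1"] by (simp add: add.commute)
  ultimately have "0 < (-1) ^ k * sin (real (Suc k) * t)"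
    by (rule minus_one_power_mult_sin_pos)
  moreover have "0 < sin t"
    using t by (intro sin_gt_zero) auto
  moreover have "sin t * ((-1) ^ k * tildeU k x) = (-1) ^ k * sin (real (Suc k) * t)"
    using sin_mult_tildeU[of t k] t by (simp add: algebra_simps)
  ultimately show ?thesis
    by (metis zero_less_mult_pos)
qed

section \<open>The polynomial \<open>\<Phi>\<^sub>n\<close>\<close>

fun tildeU_poly :: "nat \<Rightarrow> real poly" where
  "tildeU_poly 0 = 1"
| "tildeU_poly (Suc 0) = [:0, 1:]"
| "tildeU_poly (Suc (Suc n)) = [:0, 1:] * tildeU_poly (Suc n) - tildeU_poly n"

lemma poly_tildeU_poly: "poly (tildeU_poly n) x = tildeU n x"
  by (induction n rule: tildeU_poly.induct) (simp_all add: tildeU_Suc_Suc)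

lemma finite_tildeU_roots: "finite {x. tildeU n x = 0}"
proof -
  have "tildeU_poly n \<noteq> 0"
    using poly_tildeU_poly[of n "-2"] tildeU_le_minus2[of "-2" n] by force
  then have "finite {x. poly (tildeU_poly n) x = 0}"
    by (rule poly_roots_finite)
  then show ?thesis
    by (simp add: poly_tildeU_poly)
qed

lemma Phi_sign_le_minus2:
  assumes "n \<ge> 1" "x \<le> -2"
  shows "0 < (-1) ^ n * Phi n x"
proof -
  obtain m where n: "n = Suc m"
    using assms by (cases n) auto
  define P where "P = (real n + 1) * x\<^sup>2 - 6 * x - 4 * real n"
  have "2 * 2 \<le> (- x) * (- x)"
    using assms by (intro mult_mono) auto
  then have "(real n + 1) * 4 \<le> (real n + 1) * x\<^sup>2"
    by (intro mult_left_mono) (auto simp: power2_eq_square)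
  then have "16 * 1 \<le> P * ((-1) ^ n * tildeU n x)"
    using assms tildeU_le_minus2[of x n] by (intro mult_mono) (auto simp: P_def)
  moreover have "-1 \<le> (-1::real) ^ m"
    by (cases "even m") auto
  then have "0 \<le> 2 * (x + 2) * ((-1) ^ n - (-1) ^ m * tildeU m x)"
    using assms tildeU_le_minus2[of x m] by (intro mult_nonpos_nonpos) (auto simp: n)
  moreover have "(-1) ^ n * Phi n x
      = P * ((-1) ^ n * tildeU n x) + 2 * (x + 2) * ((-1) ^ n - (-1) ^ m * tildeU m x)"
    by (simp add: Phi_def P_def n algebra_simps)
  ultimately show ?thesis
    by linarith
qed

lemma finite_Phi_roots:
  assumes "n \<ge> 1"
  shows "finite {x. Phi n x = 0}"
proof -
  define p where "p = [:- 4 * real n, -6, real n + 1:] * tildeU_poly n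
    + [:4, 2:] * tildeU_poly (n - 1) + [:4, 2:]"
  have poly_p: "poly p x = Phi n x" for x
    by (simp add: p_def Phi_def poly_tildeU_poly power2_eq_square algebra_simps)
  have "p \<noteq> 0"
    using poly_p[of "-2"] Phi_sign_le_minus2[OF assms, of "-2"] by force
  then have "finite {x. poly p x = 0}"
    by (rule poly_roots_finite)
  then show ?thesis
    by (simp add: poly_p)
qed

lemma Phi_2: "Phi 2 x = 3 * (x - 2)\<^sup>2 * (x + 1)\<^sup>2"
proof -
  have U2: "tildeU 2 x = x * x - 1" and U1: "tildeU (2 - 1) x = x"
    using tildeU_Suc_Suc[of 0 x] by (simp_all add: numeral_2_eq_2)
  show ?thesis
    unfolding Phi_def U2 U1 by (simp add: power2_eq_square algebra_simps)
qed

lemma Phi_mult_identity: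
  fixes m :: nat and x :: real
  defines "P \<equiv> (real (Suc m) + 1) * x\<^sup>2 - 6 * x - 4 * real (Suc m)"
  shows "Phi (Suc m) x * (1 - tildeU m x)
    = tildeU (Suc m) x * (P - tildeU m x * (P + 2 * x * (x + 2)) + 2 * (x + 2) * tildeU (Suc m) x)"
proof -
  have "Phi (Suc m) x * (1 - tildeU m x)
      = tildeU (Suc m) x * (P - tildeU m x * (P + 2 * x * (x + 2)) + 2 * (x + 2) * tildeU (Suc m) x)
        + 2 * (x + 2) * (1 - ((tildeU (Suc m) x)\<^sup>2 + (tildeU m x)\<^sup>2 - x * tildeU (Suc m) x * tildeU m x))"
    by (simp add: Phi_def P_def power2_eq_square algebra_simps)
  then show ?thesis
    by (simp add: tildeU_cassini)
qed

lemma Phi_coeffs_pos: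
  fixes x :: real
  assumes "n \<ge> 4" "-2 < x" "x < ev_min n"
  shows "0 < (real n + 1) * x\<^sup>2 - 6 * x - 4 * real n"
    and "0 < (real n + 1) * x\<^sup>2 - 6 * x - 4 * real n + 2 * x * (x + 2)"
proof -
  define N where "N = real n"
  define d where "d = x + 2"
  have "N \<ge> 4" "d > 0"
    using assms by (simp_all add: N_def d_def)
  have "d * (real n + 1)\<^sup>2 < (ev_min n + 2) * (real n + 1)\<^sup>2"
    using assms(3) by (intro mult_strict_right_mono) (auto simp: d_def)
  then have "d * (N + 1)\<^sup>2 < 10"
    using ev_min_plus2_bound[of n] unfolding N_def by linarith
  moreover have "(4 * N + 14) * 10 \<le> 16 * (N + 1)\<^sup>2"
  proof -
    have "0 \<le> (N - 4) * (16 * N + 56)"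
      using \<open>N \<ge> 4\<close> by simp
    moreover have "16 * (N + 1)\<^sup>2 - (4 * N + 14) * 10 = (N - 4) * (16 * N + 56) + 100"
      by (simp add: power2_eq_square algebra_simps)
    ultimately show ?thesis
      by linarith
  qed
  moreover have "(4 * N + 14) * (d * (N + 1)\<^sup>2) < (4 * N + 14) * 10"
    using \<open>d * (N + 1)\<^sup>2 < 10\<close> \<open>N \<ge> 4\<close> by (intro mult_strict_left_mono) auto
  ultimately have "(4 * N + 14) * d * (N + 1)\<^sup>2 < 16 * (N + 1)\<^sup>2"
    by (simp only: mult.assoc)
  then have "(4 * N + 14) * d < 16"
    by (rule mult_right_less_imp_less) simp
  moreover have "0 \<le> (N + 1) * d\<^sup>2" "0 \<le> (N + 3) * d\<^sup>2"
    using \<open>N \<ge> 4\<close> by simp_all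
  moreover have "(real n + 1) * x\<^sup>2 - 6 * x - 4 * real n = (16 - (4 * N + 14) * d) + 4 * d + (N + 1) * d\<^sup>2"
    and "(real n + 1) * x\<^sup>2 - 6 * x - 4 * real n + 2 * x * (x + 2)
       = (16 - (4 * N + 14) * d) + (N + 3) * d\<^sup>2"
    by (simp_all add: N_def d_def power2_eq_square algebra_simps)
  ultimately show "0 < (real n + 1) * x\<^sup>2 - 6 * x - 4 * real n"
    and "0 < (real n + 1) * x\<^sup>2 - 6 * x - 4 * real n + 2 * x * (x + 2)"
    using \<open>d > 0\<close> by linarith+
qed

lemma Phi_pos_below_ev_min:
  assumes "n \<ge> 4" "even n" "-2 < x" "x < ev_min n"
  shows "0 < Phi n x"
proof -
  obtain m where n: "n = Suc m"
    using assms by (cases n) auto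
  let ?P = "(real n + 1) * x\<^sup>2 - 6 * x - 4 * real n"
  have "0 < tildeU n x"
    using tildeU_sign_below_ev_min[OF assms(4)] assms(2) by simp
  have "tildeU m x < 0"
    using tildeU_sign_below_ev_min[of x m] assms(2,4) ev_min_Suc_less[of m] by (simp add: n)
  then have "tildeU m x * (?P + 2 * x * (x + 2)) < 0"
    using Phi_coeffs_pos(2)[OF assms(1,3,4)] by (rule mult_neg_pos)
  moreover have "0 < 2 * (x + 2) * tildeU n x"
    using assms(3) \<open>0 < tildeU n x\<close> by simp
  ultimately have "0 < ?P - tildeU m x * (?P + 2 * x * (x + 2)) + 2 * (x + 2) * tildeU n x"
    using Phi_coeffs_pos(1)[OF assms(1,3,4)] by linarith
  then have "0 < Phi n x * (1 - tildeU m x)"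
    using \<open>0 < tildeU n x\<close> unfolding n Phi_mult_identity by simp
  moreover have "0 < 1 - tildeU m x"
    using \<open>tildeU m x < 0\<close> by simp
  ultimately show ?thesis
    by (simp add: zero_less_mult_iff)
qed

section \<open>The minimal Rayleigh quotient on the path\<close>

text \<open>Vectors on \<open>P\<^sub>n\<close> are functions vanishing outside \<open>{1..n}\<close>; their values at \<open>0\<close> and
  \<open>n + 1\<close> serve as the zero boundary values of the recurrences below. For such vectors
  \<open>Aform n g h = \<langle>g, (2I + A\<^sub>n) h\<rangle>\<close> and \<open>Jform n g h = \<langle>g, (I + J) h\<rangle>\<close>, \<open>J\<close> the all-ones matrix.\<close>
definition path_supported :: "nat \<Rightarrow> (nat \<Rightarrow> real) \<Rightarrow> bool" where
  "path_supported n g \<longleftrightarrow> (\<forall>k. k \<notin> {1..n} \<longrightarrow> g k = 0)"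

definition psum :: "nat \<Rightarrow> (nat \<Rightarrow> real) \<Rightarrow> real" where
  "psum n g = (\<Sum>k\<in>{1..n}. g k)"

definition Aform :: "nat \<Rightarrow> (nat \<Rightarrow> real) \<Rightarrow> (nat \<Rightarrow> real) \<Rightarrow> real" where
  "Aform n g h = (\<Sum>k\<le>n. (g k + g (Suc k)) * (h k + h (Suc k)))"

definition Jform :: "nat \<Rightarrow> (nat \<Rightarrow> real) \<Rightarrow> (nat \<Rightarrow> real) \<Rightarrow> real" where
  "Jform n g h = (\<Sum>k\<in>{1..n}. g k * h k) + psum n g * psum n h"

lemma path_supported_0 [simp]: "path_supported n g \<Longrightarrow> g 0 = 0"
  and path_supported_Suc [simp]: "path_supported n g \<Longrightarrow> g (Suc n) = 0"
  by (simp_all add: path_supported_def)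

lemma Aform_supported_right:
  assumes "path_supported n h"
  shows "Aform n g h = (\<Sum>i\<in>{1..n}. h i * (g (i - 1) + 2 * g i + g (i + 1)))"
proof -
  have "Aform n g h = (g 0 + g 1) * h 0 + (\<Sum>i\<in>{1..n}. h i * (g (i - 1) + 2 * g i + g (i + 1)))
      + (g n + g (Suc n)) * h (Suc n)" for n
    by (induction n) (simp_all add: Aform_def algebra_simps)
  then show ?thesis
    using assms by simp
qed

lemma Aform_nonneg: "0 \<le> Aform n g g"
  by (simp add: Aform_def sum_nonneg)

lemma Aform_add_scaled:
  "Aform n (\<lambda>k. g k + t * h k) (\<lambda>k. g k + t * h k)
    = Aform n g g + 2 * t * Aform n g h + t\<^sup>2 * Aform n h h"
  by (simp add: Aform_def power2_eq_square algebra_simps sum.distrib sum_distrib_left)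

lemma Jform_add_scaled:
  "Jform n (\<lambda>k. g k + t * h k) (\<lambda>k. g k + t * h k)
    = Jform n g g + 2 * t * Jform n g h + t\<^sup>2 * Jform n h h"
  by (simp add: Jform_def psum_def power2_eq_square algebra_simps sum.distrib sum_distrib_left)

lemma Aform_scale: "Aform n (\<lambda>k. c * g k) (\<lambda>k. c * g k) = c\<^sup>2 * Aform n g g"
  by (simp add: Aform_def sum_distrib_left power2_eq_square algebra_simps)

lemma Jform_scale: "Jform n (\<lambda>k. c * g k) (\<lambda>k. c * g k) = c\<^sup>2 * Jform n g g"
  by (simp add: Jform_def psum_def sum_distrib_left power2_eq_square algebra_simps flip: sum_distrib_left)

lemma Jform_pos:
  assumes "path_supported n g" "g \<noteq> (\<lambda>_. 0)"
  shows "0 < Jform n g g"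
proof -
  obtain k where "g k \<noteq> 0"
    using assms(2) by auto
  then have "k \<in> {1..n}"
    using assms(1) by (auto simp: path_supported_def)
  then have "0 < (\<Sum>j\<in>{1..n}. (g j)\<^sup>2)"
    using \<open>g k \<noteq> 0\<close> by (intro sum_pos2[of _ k]) auto
  then show ?thesis
    by (simp add: Jform_def power2_eq_square add_pos_nonneg)
qed

lemma Aform_eigen:
  assumes "path_supported n g"
    and "\<And>i. i \<in> {1..n} \<Longrightarrow> g (i - 1) + 2 * g i + g (i + 1) = \<mu> * g i + c"
  shows "Aform n g g = \<mu> * (\<Sum>i\<in>{1..n}. (g i)\<^sup>2) + c * psum n g"
proof -
  have "Aform n g g = (\<Sum>i\<in>{1..n}. \<mu> * (g i)\<^sup>2 + c * g i)"
    using assms by (simp add: Aform_supported_right power2_eq_square algebra_simps)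
  then show ?thesis
    by (simp add: psum_def sum.distrib sum_distrib_left)
qed

definition rq_min :: "nat \<Rightarrow> real" where
  "rq_min n = Inf {Aform n g g | g. path_supported n g \<and> Jform n g g = 1}"

lemma Jform_normalise:
  assumes "path_supported n g" "g \<noteq> (\<lambda>_. 0)"
  defines "h \<equiv> \<lambda>k. 1 / sqrt (Jform n g g) * g k"
  shows "path_supported n h" "Jform n h h = 1" "Aform n h h = Aform n g g / Jform n g g"
proof -
  have "0 < Jform n g g"
    using Jform_pos[OF assms(1,2)] .
  then show "path_supported n h" "Jform n h h = 1" "Aform n h h = Aform n g g / Jform n g g"
    using assms(1) unfolding h_def Jform_scale Aform_scale
    by (simp_all add: path_supported_def power_divide)
qed

lemma unit_vector_forms:
  assumes "n \<ge> 1"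
  defines "e \<equiv> \<lambda>k. if k = 1 then 1 else 0 :: real"
  shows "path_supported n e" "e \<noteq> (\<lambda>_. 0)" "Aform n e e = 2" "Jform n e e = 2"
proof -
  show "path_supported n e" "e \<noteq> (\<lambda>_. 0)"
    using assms by (auto simp: e_def path_supported_def fun_eq_iff)
  have "Aform n e e = (\<Sum>i\<in>{1..n}. if i = 1 then 2 else 0)"
    unfolding Aform_supported_right[OF \<open>path_supported n e\<close>] by (intro sum.cong) (auto simp: e_def)
  then show "Aform n e e = 2"
    using assms by simp
  have "Jform n e e = (\<Sum>i\<in>{1..n}. if i = 1 then 1 else 0) + (\<Sum>i\<in>{1..n}. if i = 1 then 1 else 0)\<^sup>2"
    unfolding Jform_def psum_def power2_eq_square
    by (intro arg_cong2[where f = "(+)"] sum.cong) (auto simp: e_def)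
  then show "Jform n e e = 2"
    using assms by simp
qed

lemma bdd_below_Rayleigh: "bdd_below {Aform n g g | g. path_supported n g \<and> Jform n g g = 1}"
  by (auto intro: bdd_belowI[of _ 0] Aform_nonneg)

lemma rq_min_le:
  assumes "path_supported n g"
  shows "rq_min n * Jform n g g \<le> Aform n g g"
proof (cases "g = (\<lambda>_. 0)")
  case True
  then show ?thesis
    by (simp add: Aform_def Jform_def psum_def)
next
  case False
  have "rq_min n \<le> Aform n g g / Jform n g g"
    using Jform_normalise[OF assms False] unfolding rq_min_def
    by (metis (mono_tags, lifting) bdd_below_Rayleigh cInf_lower mem_Collect_eq)
  then show ?thesis
    using Jform_pos[OF assms False] by (simp add: field_simps)
qed

lemma rq_min_le_eigenvalue:
  assumes "path_supported n g" "g \<noteq> (\<lambda>_. 0)" "Aform n g g = \<mu> * Jform n g g"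
  shows "rq_min n \<le> \<mu>"
  using rq_min_le[OF assms(1)] Jform_pos[OF assms(1,2)] assms(3) by simp

lemma rq_min_le_1:
  assumes "n \<ge> 1"
  shows "rq_min n \<le> 1"
  using rq_min_le_eigenvalue[of n _ 1] unit_vector_forms[OF assms] by simp

lemma continuous_on_Aform: "continuous_on S (\<lambda>g. Aform n g g)"
  unfolding Aform_def
  by (intro continuous_intros continuous_on_subset[OF continuous_on_product_coordinates]) auto

lemma continuous_on_Jform: "continuous_on S (\<lambda>g. Jform n g g)"
  unfolding Jform_def psum_def
  by (intro continuous_intros continuous_on_subset[OF continuous_on_product_coordinates]) auto

lemma compact_path_sphere: "compact {g. path_supported n g \<and> Jform n g g = 1}"
proof -
  let ?K = "{g. path_supported n g \<and> Jform n g g = 1}"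
  define B where "B = PiE UNIV (\<lambda>k. if k \<in> {1..n} then {-1..1} else {0::real})"
  have "compactin (product_topology (\<lambda>i. euclidean) UNIV) B"
    unfolding B_def compactin_PiE by auto
  then have "compact B"
    by (simp add: euclidean_product_topology)
  have "?K = {g. Jform n g g = 1} \<inter> (\<Inter>k\<in>- {1..n}. {g. g k = 0})"
    by (auto simp: path_supported_def)
  moreover have "closed {g. Jform n g g = 1}"
    by (intro closed_Collect_eq continuous_on_Jform continuous_on_const)
  moreover have "closed (\<Inter>k\<in>- {1..n}. {g :: nat \<Rightarrow> real. g k = 0})"
    by (intro closed_INT ballI closed_Collect_eq continuous_on_product_coordinates continuous_on_const)
  ultimately have "closed ?K"
    by (simp only: closed_Int)
  have "g \<in> B" if "path_supported n g" "Jform n g g = 1" for g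
  proof -
    have "\<bar>g k\<bar> \<le> 1" if "k \<in> {1..n}" for k
    proof -
      have "(g k)\<^sup>2 \<le> (\<Sum>j\<in>{1..n}. (g j)\<^sup>2)"
        using that by (intro member_le_sum) auto
      also have "\<dots> \<le> Jform n g g"
        by (simp add: Jform_def power2_eq_square)
      finally show ?thesis
        using \<open>Jform n g g = 1\<close> by (simp add: abs_square_le_1)
    qed
    then show ?thesis
      using \<open>path_supported n g\<close> unfolding B_def PiE_iff path_supported_def
      by (auto simp: abs_le_iff)
  qed
  then have "?K = B \<inter> ?K"
    by blast
  then show ?thesis
    using compact_Int_closed[OF \<open>compact B\<close> \<open>closed ?K\<close>] by simp
qed

lemma rq_min_attained:
  assumes "n \<ge> 1"
  obtains g where "path_supported n g" "Jform n g g = 1" "Aform n g g = rq_min n"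
proof -
  let ?K = "{g. path_supported n g \<and> Jform n g g = 1}"
  have "?K \<noteq> {}"
    using Jform_normalise[OF unit_vector_forms(1,2)[OF assms]] by blast
  moreover have "continuous_on ?K (\<lambda>g. Aform n g g)"
    by (rule continuous_on_Aform)
  ultimately obtain g where g: "g \<in> ?K" "\<And>h. h \<in> ?K \<Longrightarrow> Aform n g g \<le> Aform n h h"
    using continuous_attains_inf[OF compact_path_sphere] by blast
  then have "rq_min n = Aform n g g"
    unfolding rq_min_def by (intro cInf_eq_minimum) auto
  then show ?thesis
    using g(1) that by auto
qed

lemma linear_coeff_zero_if_nonneg:
  fixes a b :: real
  assumes "\<And>t. 0 \<le> a * t + b * t\<^sup>2"
  shows "a = 0"
proof (rule ccontr)
  assume "a \<noteq> 0"
  define B where "B = \<bar>b\<bar> + 1"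
  define t where "t = - a / (2 * B)"
  have "0 < B"
    by (simp add: B_def)
  have "a * t + b * t\<^sup>2 \<le> a * t + (B - 1) * t\<^sup>2"
    by (simp add: B_def mult_right_mono)
  also have "\<dots> = - (a\<^sup>2 * (B + 1) / (4 * B\<^sup>2))"
    using \<open>0 < B\<close> by (simp add: t_def power2_eq_square field_simps)
  also have "\<dots> < 0"
    using \<open>a \<noteq> 0\<close> \<open>0 < B\<close> by (simp add: divide_neg_pos)
  finally show False
    using assms[of t] by simp
qed

lemma rq_min_euler_lagrange:
  assumes g: "path_supported n g" "Jform n g g = 1" "Aform n g g = rq_min n"
    and i: "i \<in> {1..n}"
  shows "g (i - 1) + 2 * g i + g (i + 1) = rq_min n * (g i + psum n g)"
proof -
  define e where "e = (\<lambda>k. if k = i then 1 else 0 :: real)"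
  have e: "path_supported n e"
    using i by (auto simp: e_def path_supported_def)
  have "0 \<le> 2 * (Aform n g e - rq_min n * Jform n g e) * t
      + (Aform n e e - rq_min n * Jform n e e) * t\<^sup>2" for t
  proof -
    have "path_supported n (\<lambda>k. g k + t * e k)"
      using g(1) e by (simp add: path_supported_def)
    from rq_min_le[OF this] show ?thesis
      unfolding Aform_add_scaled Jform_add_scaled g(2,3) by (simp add: algebra_simps)
  qed
  then have "Aform n g e = rq_min n * Jform n g e"
    using linear_coeff_zero_if_nonneg by fastforce
  moreover have "Aform n g e = (\<Sum>k\<in>{1..n}. if k = i then g (k - 1) + 2 * g k + g (k + 1) else 0)"
    unfolding Aform_supported_right[OF e] by (intro sum.cong) (auto simp: e_def)
  moreover have "Jform n g e = g i + psum n g"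
    using i by (simp add: Jform_def psum_def e_def if_distrib sum.delta cong: if_cong)
  ultimately show ?thesis
    using i by simp
qed

lemma rq_min_Suc_le:
  assumes "n \<ge> 1"
  shows "rq_min (Suc n) \<le> rq_min n"
proof -
  obtain g where g: "path_supported n g" "Jform n g g = 1" "Aform n g g = rq_min n"
    using rq_min_attained[OF assms] .
  have "path_supported (Suc n) g" "g (Suc (Suc n)) = 0"
    using g(1) by (auto simp: path_supported_def)
  then have "Aform (Suc n) g g = Aform n g g" "Jform (Suc n) g g = Jform n g g"
    using g(1) by (simp_all add: Aform_def Jform_def psum_def)
  then show ?thesis
    using rq_min_le[OF \<open>path_supported (Suc n) g\<close>] g by simp
qed

section \<open>The three-term recurrence on the path\<close>

definition cheb_vec :: "nat \<Rightarrow> real \<Rightarrow> real \<Rightarrow> real \<Rightarrow> nat \<Rightarrow> real" where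
  "cheb_vec n a c x k = (if k \<in> {1..n} then a * tildeU (k - 1) x + c * USum (k - 1) x else 0)"

lemma cheb_vec_supported: "path_supported n (cheb_vec n a c x)"
  by (simp add: path_supported_def cheb_vec_def)

lemma cheb_vec_0_0: "cheb_vec n 0 0 x = (\<lambda>_. 0)"
  by (simp add: cheb_vec_def fun_eq_iff)

lemma cheb_vec_1: "n \<ge> 1 \<Longrightarrow> cheb_vec n a c x 1 = a"
  by (simp add: cheb_vec_def)

lemma cheb_vec_Suc:
  assumes "a * tildeU n x + c * USum n x = 0" "k \<le> n"
  shows "cheb_vec n a c x (Suc k) = a * tildeU k x + c * USum k x"
  using assms by (cases "k = n") (simp_all add: cheb_vec_def)

lemma psum_cheb_vec: "psum n (cheb_vec n a c x) = a * USum n x + c * USum2 n x"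
proof -
  have "psum n (cheb_vec n a c x) = (\<Sum>k<n. cheb_vec n a c x (Suc k))"
    unfolding psum_def using sum.atLeast1_atMost_eq by simp
  also have "\<dots> = (\<Sum>k<n. a * tildeU k x + c * USum k x)"
    by (intro sum.cong) (auto simp: cheb_vec_def)
  finally show ?thesis
    by (simp add: USum_def USum2_def sum.distrib sum_distrib_left)
qed

lemma cheb_vec_recurrence:
  assumes "a * tildeU n x + c * USum n x = 0" "i \<in> {1..n}"
  shows "cheb_vec n a c x (i - 1) + cheb_vec n a c x (i + 1) = x * cheb_vec n a c x i + c"
proof -
  obtain j where i: "i = Suc j" and "j < n"
    using assms(2) by (cases i) auto
  note vec = cheb_vec_Suc[OF assms(1)]
  show ?thesis
  proof (cases j)
    case 0
    then show ?thesis
      using vec[of 1] \<open>j < n\<close> by (simp add: i cheb_vec_def)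
  next
    case (Suc l)
    then show ?thesis
      using vec[of l] vec[of "Suc l"] vec[of "Suc (Suc l)"] \<open>j < n\<close>
      by (simp add: i tildeU_Suc_Suc USum_Suc_Suc algebra_simps)
  qed
qed

lemma cheb_vec_nonzero:
  assumes "n \<ge> 1" "a * tildeU n x + c * USum n x = 0" "a \<noteq> 0 \<or> c \<noteq> 0"
  shows "cheb_vec n a c x \<noteq> (\<lambda>_. 0)"
proof
  assume zero: "cheb_vec n a c x = (\<lambda>_. 0)"
  then have "a = 0"
    using cheb_vec_1[OF assms(1)] by metis
  moreover have "c = 0"
    using cheb_vec_recurrence[OF assms(2), of 1] assms(1) by (simp add: zero)
  ultimately show False
    using assms(3) by simp
qed

lemma path_recurrence_solution:
  assumes "path_supported n w"
    and rec: "\<And>i. i \<in> {1..n} \<Longrightarrow> w (i - 1) + w (i + 1) = x * w i + c"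
  shows "w 1 * tildeU n x + c * USum n x = 0" and "w = cheb_vec n (w 1) c x"
proof -
  define a where "a = w 1"
  have w_Suc: "w (Suc k) = a * tildeU k x + c * USum k x" if "k \<le> n" for k
    using that
  proof (induction k rule: induct_nat_012)
    case 0
    then show ?case
      by (simp add: a_def)
  next
    case 1
    then show ?case
      using rec[of 1] assms(1) by (simp add: a_def)
  next
    case (ge2 k)
    have "w (Suc (Suc (Suc k))) = x * w (Suc (Suc k)) - w (Suc k) + c"
      using rec[of "Suc (Suc k)"] ge2.prems by simp
    then show ?case
      using ge2 by (simp add: tildeU_Suc_Suc USum_Suc_Suc algebra_simps)
  qed
  show boundary: "w 1 * tildeU n x + c * USum n x = 0"
    using w_Suc[of n] assms(1) by (simp add: a_def)
  have "w k = cheb_vec n a c x k" for k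
  proof (cases "k \<in> {1..n}")
    case True
    then obtain j where "k = Suc j" "j \<le> n"
      by (cases k) auto
    then show ?thesis
      using w_Suc[OF \<open>j \<le> n\<close>] cheb_vec_Suc[OF boundary[folded a_def] \<open>j \<le> n\<close>] by simp
  next
    case False
    then have "w k = 0"
      using assms(1) unfolding path_supported_def by blast
    then show ?thesis
      by (simp only: cheb_vec_def if_not_P[OF False])
  qed
  then show "w = cheb_vec n (w 1) c x"
    unfolding a_def[symmetric] by (rule ext)
qed

lemma det2_eq_0_iff:
  fixes p q r s :: real
  shows "p * s - q * r = 0 \<longleftrightarrow> (\<exists>a c. (a \<noteq> 0 \<or> c \<noteq> 0) \<and> a * p + c * q = 0 \<and> a * r + c * s = 0)"
proof
  assume det: "p * s - q * r = 0"
  consider "p \<noteq> 0 \<or> q \<noteq> 0" | "r \<noteq> 0 \<or> s \<noteq> 0" | "p = 0" "q = 0" "r = 0" "s = 0"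
    by blast
  then show "\<exists>a c. (a \<noteq> 0 \<or> c \<noteq> 0) \<and> a * p + c * q = 0 \<and> a * r + c * s = 0"
  proof cases
    case 1
    then show ?thesis
      using det by (intro exI[of _ "- q"] exI[of _ p]) (auto simp: algebra_simps)
  next
    case 2
    then show ?thesis
      using det by (intro exI[of _ "- s"] exI[of _ r]) (auto simp: algebra_simps)
  next
    case 3
    then show ?thesis
      by (intro exI[of _ 1] exI[of _ 0]) simp
  qed
next
  assume "\<exists>a c. (a \<noteq> 0 \<or> c \<noteq> 0) \<and> a * p + c * q = 0 \<and> a * r + c * s = 0"
  then obtain a c where ac: "a \<noteq> 0 \<or> c \<noteq> 0" "a * p + c * q = 0" "a * r + c * s = 0"
    by blast
  have "a * (p * s - q * r) = s * (a * p + c * q) - q * (a * r + c * s)"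
    and "c * (p * s - q * r) = p * (a * r + c * s) - r * (a * p + c * q)"
    by (simp_all add: algebra_simps)
  then show "p * s - q * r = 0"
    using ac by auto
qed

lemma Phi_rq_min:
  assumes "n \<ge> 1"
  shows "Phi n (rq_min n - 2) = 0"
proof -
  obtain g where g: "path_supported n g" "Jform n g g = 1" "Aform n g g = rq_min n"
    using rq_min_attained[OF assms] .
  define x where "x = rq_min n - 2"
  define c where "c = (x + 2) * psum n g"
  have rec: "g (i - 1) + g (i + 1) = x * g i + c" if "i \<in> {1..n}" for i
    using rq_min_euler_lagrange[OF g that] by (simp add: x_def c_def algebra_simps)
  have sol: "g 1 * tildeU n x + c * USum n x = 0" "g = cheb_vec n (g 1) c x"
    using path_recurrence_solution[of n g x c] g(1) rec by auto
  have "psum n g = g 1 * USum n x + c * USum2 n x"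
    using arg_cong[OF sol(2), of "psum n"] by (simp only: psum_cheb_vec)
  have "g 1 * ((x + 2) * USum n x) + c * ((x + 2) * USum2 n x - 1)
      = (x + 2) * (g 1 * USum n x + c * USum2 n x) - c"
    by (simp add: algebra_simps)
  also have "\<dots> = (x + 2) * psum n g - c"
    by (simp only: \<open>psum n g = g 1 * USum n x + c * USum2 n x\<close>)
  also have "\<dots> = 0"
    by (simp add: c_def)
  finally have "g 1 * ((x + 2) * USum n x) + c * ((x + 2) * USum2 n x - 1) = 0" .
  moreover have "g 1 \<noteq> 0 \<or> c \<noteq> 0"
  proof (rule ccontr)
    assume "\<not> (g 1 \<noteq> 0 \<or> c \<noteq> 0)"
    then have "g = (\<lambda>_. 0)"
      using sol(2) by (metis cheb_vec_0_0)
    then show False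
      using g(2) by (simp add: Jform_def psum_def)
  qed
  ultimately have "tildeU n x * ((x + 2) * USum2 n x - 1) - USum n x * ((x + 2) * USum n x) = 0"
    using sol(1) det2_eq_0_iff[of "tildeU n x" "(x + 2) * USum2 n x - 1" "USum n x" "(x + 2) * USum n x"]
    by blast
  then have "cheb_det n x = 0"
    by (simp add: cheb_det_def power2_eq_square algebra_simps)
  then show ?thesis
    using Phi_eq_cheb_det[OF assms] by (simp add: x_def)
qed

lemma rq_min_le_cheb_det_root:
  assumes "n \<ge> 1" "cheb_det n x = 0"
  shows "rq_min n \<le> x + 2"
proof -
  obtain a c where ac: "a \<noteq> 0 \<or> c \<noteq> 0" and boundary: "a * tildeU n x + c * USum n x = 0"
    and "a * ((x + 2) * USum n x) + c * ((x + 2) * USum2 n x - 1) = 0"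
    using assms(2) det2_eq_0_iff[of "tildeU n x" "(x + 2) * USum2 n x - 1" "USum n x" "(x + 2) * USum n x"]
    by (auto simp: cheb_det_def power2_eq_square algebra_simps)
  define g where "g = cheb_vec n a c x"
  have "c = (x + 2) * psum n g"
    using \<open>a * ((x + 2) * USum n x) + c * ((x + 2) * USum2 n x - 1) = 0\<close>
    by (simp add: g_def psum_cheb_vec algebra_simps)
  have "g (i - 1) + 2 * g i + g (i + 1) = (x + 2) * g i + c" if "i \<in> {1..n}" for i
    using cheb_vec_recurrence[OF boundary that] by (simp add: g_def algebra_simps)
  then have "Aform n g g = (x + 2) * (\<Sum>i\<in>{1..n}. (g i)\<^sup>2) + c * psum n g"
    by (intro Aform_eigen) (simp_all add: g_def cheb_vec_supported)
  also have "\<dots> = (x + 2) * Jform n g g"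
    by (simp add: \<open>c = (x + 2) * psum n g\<close> Jform_def power2_eq_square algebra_simps)
  finally show ?thesis
    using cheb_vec_nonzero[OF assms(1) boundary ac]
    by (intro rq_min_le_eigenvalue[of n g]) (simp_all add: g_def cheb_vec_supported)
qed

lemma rq_min_le_Phi_root:
  assumes "n \<ge> 1" "Phi n x = 0"
  shows "rq_min n - 2 \<le> x"
proof (cases "x \<ge> -1")
  case True
  then show ?thesis
    using rq_min_le_1[OF assms(1)] by simp
next
  case False
  then have "cheb_det n x = 0"
    using assms Phi_eq_cheb_det[OF assms(1), of x] by simp
  then show ?thesis
    using rq_min_le_cheb_det_root[OF assms(1)] by fastforce
qed

lemma alpha_tilde_eq_rq_min:
  assumes "n \<ge> 1"
  shows "alpha_tilde n = rq_min n - 2"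
  unfolding alpha_tilde_def
  using assms by (intro Min_eqI) (auto simp: finite_Phi_roots Phi_rq_min rq_min_le_Phi_root)

section \<open>The distance matrix of the fan \<open>K\<^sub>1 + P\<^sub>n\<close>\<close>

lemma gdist_self:
  assumes "x \<in> V"
  shows "gdist V E x x = 0"
proof -
  have "walk_of_len V E 0 x x"
    using assms by (auto simp: walk_of_len_def)
  then show ?thesis
    by (simp add: gdist_def)
qed

lemma walk_of_len_0_iff: "walk_of_len V E 0 x y \<longleftrightarrow> x = y \<and> x \<in> V"
  by (auto simp: walk_of_len_def)

lemma gdist_edge:
  assumes "x \<in> V" "y \<in> V" "x \<noteq> y" "E x y"
  shows "gdist V E x y = 1"
  unfolding gdist_def
proof (rule Least_equality)
  show "walk_of_len V E 1 x y"
    using assms unfolding walk_of_len_def by (intro exI[of _ "\<lambda>i. if i = 0 then x else y"]) auto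
  show "1 \<le> k" if "walk_of_len V E k x y" for k
    using that assms(3) by (cases k) (auto simp: walk_of_len_0_iff)
qed

lemma gdist_common_neighbour:
  assumes "x \<in> V" "y \<in> V" "z \<in> V" "x \<noteq> y" "\<not> E x y" "E x z" "E z y"
  shows "gdist V E x y = 2"
  unfolding gdist_def
proof (rule Least_equality)
  show "walk_of_len V E 2 x y"
    using assms unfolding walk_of_len_def
    by (intro exI[of _ "\<lambda>i. if i = 0 then x else if i = 1 then z else y"])
      (auto simp: numeral_2_eq_2 less_Suc_eq le_Suc_eq)
  show "2 \<le> k" if "walk_of_len V E k x y" for k
  proof (rule ccontr)
    assume "\<not> 2 \<le> k"
    then consider "k = 0" | "k = 1"
      by linarith
    then show False
      using that assms(4,5) by cases (auto simp: walk_of_len_0_iff walk_of_len_def)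
  qed
qed

abbreviation fan_V :: "nat \<Rightarrow> (unit + nat) set" where
  "fan_V n \<equiv> join_V K1_V (path_V n)"

abbreviation fan_E :: "unit + nat \<Rightarrow> unit + nat \<Rightarrow> bool" where
  "fan_E \<equiv> join_E K1_E path_E"

lemma sum_fan_V: "sum h (fan_V n) = h (Inl ()) + (\<Sum>k\<in>{1..n}. h (Inr k))"
proof -
  have "sum h (fan_V n) = sum h (Inl ` {()}) + sum h (Inr ` {1..n})"
    by (subst sum.union_disjoint[symmetric]) (auto simp: join_V_def K1_V_def path_V_def)
  also have "sum h (Inr ` {1..n}) = (\<Sum>k\<in>{1..n}. h (Inr k))"
    by (simp add: sum.reindex)
  finally show ?thesis
    by simp
qed

lemma Inl_in_fan_V: "Inl () \<in> fan_V n"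
  and Inr_in_fan_V: "Inr k \<in> fan_V n \<longleftrightarrow> k \<in> {1..n}"
  by (auto simp: join_V_def K1_V_def path_V_def)

lemma gdist_fan:
  shows "gdist (fan_V n) fan_E (Inl ()) (Inl ()) = 0"
    and "k \<in> {1..n} \<Longrightarrow> gdist (fan_V n) fan_E (Inl ()) (Inr k) = 1"
    and "k \<in> {1..n} \<Longrightarrow> gdist (fan_V n) fan_E (Inr k) (Inl ()) = 1"
    and "i \<in> {1..n} \<Longrightarrow> j \<in> {1..n} \<Longrightarrow>
      real (gdist (fan_V n) fan_E (Inr i) (Inr j)) = 2 - 2 * (if i = j then 1 else 0) - adjA i j"
proof -
  show "gdist (fan_V n) fan_E (Inl ()) (Inl ()) = 0"
    using Inl_in_fan_V by (rule gdist_self)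
  show "gdist (fan_V n) fan_E (Inl ()) (Inr k) = 1" "gdist (fan_V n) fan_E (Inr k) (Inl ()) = 1"
    if "k \<in> {1..n}"
    using that by (simp_all add: gdist_edge Inl_in_fan_V Inr_in_fan_V)
  show "real (gdist (fan_V n) fan_E (Inr i) (Inr j)) = 2 - 2 * (if i = j then 1 else 0) - adjA i j"
    if "i \<in> {1..n}" "j \<in> {1..n}"
  proof (cases "i = j")
    case True
    then show ?thesis
      using that by (simp add: gdist_self Inr_in_fan_V adjA_def path_E_def)
  next
    case False
    then show ?thesis
      using that Inl_in_fan_V[of n] gdist_common_neighbour[of "Inr i" "fan_V n" "Inr j" "Inl ()" fan_E]
      by (cases "path_E i j") (simp_all add: gdist_edge Inr_in_fan_V adjA_def)
  qed
qed

lemma adjA_mult_supported: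
  assumes "path_supported n g" "i \<in> {1..n}"
  shows "(\<Sum>j\<in>{1..n}. adjA i j * g j) = g (i - 1) + g (i + 1)"
proof -
  have "(\<Sum>j\<in>{1..n}. adjA i j * g j)
      = (\<Sum>j\<in>{1..n}. (if j = i + 1 then g j else 0) + (if j = i - 1 then g j else 0))"
    using assms(2) by (intro sum.cong) (auto simp: adjA_def path_E_def)
  also have "\<dots> = g (i + 1) + g (i - 1)"
    using assms(1) by (simp add: sum.distrib path_supported_def)
  finally show ?thesis
    by simp
qed

definition path_part :: "nat \<Rightarrow> (unit + nat \<Rightarrow> real) \<Rightarrow> nat \<Rightarrow> real" where
  "path_part n f k = (if k \<in> {1..n} then f (Inr k) else 0)"

lemma path_part_supported: "path_supported n (path_part n f)"
  by (simp add: path_supported_def path_part_def)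

lemma fan_distance_row:
  assumes "path_supported n g" "i \<in> {1..n}"
  shows "(\<Sum>j\<in>{1..n}. real (gdist (fan_V n) fan_E (Inr i) (Inr j)) * g j)
    = 2 * psum n g - 2 * g i - (g (i - 1) + g (i + 1))"
proof -
  have "(\<Sum>j\<in>{1..n}. real (gdist (fan_V n) fan_E (Inr i) (Inr j)) * g j)
      = (\<Sum>j\<in>{1..n}. 2 * g j - 2 * (if j = i then g j else 0) - adjA i j * g j)"
    by (intro sum.cong) (auto simp: gdist_fan(4)[OF assms(2)] algebra_simps)
  also have "\<dots> = 2 * psum n g - 2 * g i - (\<Sum>j\<in>{1..n}. adjA i j * g j)"
    using assms(2) by (simp add: sum_subtractf psum_def sum.delta flip: sum_distrib_left)
  finally show ?thesis
    by (simp only: adjA_mult_supported[OF assms])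
qed

lemma fan_distance_form:
  fixes n :: nat and f :: "unit + nat \<Rightarrow> real"
  defines "g \<equiv> path_part n f"
  shows "(\<Sum>x\<in>fan_V n. \<Sum>y\<in>fan_V n. f x * real (gdist (fan_V n) fan_E x y) * f y)
     = 2 * f (Inl ()) * psum n g + 2 * (psum n g)\<^sup>2 - Aform n g g"
proof -
  let ?D = "\<lambda>x y. real (gdist (fan_V n) fan_E x y)"
  have g: "path_supported n g"
    by (simp add: g_def path_part_supported)
  have f_Inr: "f (Inr k) = g k" if "k \<in> {1..n}" for k
    using that by (simp add: g_def path_part_def)
  have Inl_row: "(\<Sum>y\<in>fan_V n. ?D (Inl ()) y * f y) = psum n g"
    by (simp add: sum_fan_V gdist_fan(1,2) f_Inr psum_def)
  have Inr_row: "(\<Sum>y\<in>fan_V n. ?D (Inr i) y * f y)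
      = f (Inl ()) + 2 * psum n g - 2 * g i - (g (i - 1) + g (i + 1))" if "i \<in> {1..n}" for i
  proof -
    have "(\<Sum>y\<in>fan_V n. ?D (Inr i) y * f y)
        = ?D (Inr i) (Inl ()) * f (Inl ()) + (\<Sum>k\<in>{1..n}. ?D (Inr i) (Inr k) * g k)"
      unfolding sum_fan_V using f_Inr by (intro arg_cong2[where f = "(+)"] refl sum.cong) auto
    then show ?thesis
      by (simp only: fan_distance_row[OF g that] gdist_fan(3)[OF that])
  qed
  have "(\<Sum>x\<in>fan_V n. \<Sum>y\<in>fan_V n. f x * ?D x y * f y)
      = f (Inl ()) * (\<Sum>y\<in>fan_V n. ?D (Inl ()) y * f y)
        + (\<Sum>i\<in>{1..n}. g i * (\<Sum>y\<in>fan_V n. ?D (Inr i) y * f y))"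
    by (simp add: sum_fan_V f_Inr sum_distrib_left distrib_left mult.assoc)
  also have "\<dots> = f (Inl ()) * psum n g
      + (\<Sum>i\<in>{1..n}. g i * (f (Inl ()) + 2 * psum n g - 2 * g i - (g (i - 1) + g (i + 1))))"
    by (simp add: Inl_row Inr_row)
  also have "\<dots> = 2 * f (Inl ()) * psum n g + 2 * (psum n g)\<^sup>2
      - (\<Sum>i\<in>{1..n}. g i * (g (i - 1) + 2 * g i + g (i + 1)))"
    by (simp add: sum.distrib sum_subtractf sum_distrib_left sum_distrib_right psum_def
        power2_eq_square algebra_simps)
  finally show ?thesis
    by (simp add: Aform_supported_right[OF g])
qed

lemma fan_forms_zero_sum:
  fixes f :: "unit + nat \<Rightarrow> real"
  assumes "(\<Sum>x\<in>fan_V n. f x) = 0"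
  shows "(\<Sum>x\<in>fan_V n. \<Sum>y\<in>fan_V n. f x * real (gdist (fan_V n) fan_E x y) * f y)
      = - Aform n (path_part n f) (path_part n f)"
    and "(\<Sum>x\<in>fan_V n. (f x)\<^sup>2) = Jform n (path_part n f) (path_part n f)"
proof -
  have f_Inl: "f (Inl ()) = - psum n (path_part n f)"
    using assms by (simp add: sum_fan_V psum_def path_part_def)
  then show "(\<Sum>x\<in>fan_V n. \<Sum>y\<in>fan_V n. f x * real (gdist (fan_V n) fan_E x y) * f y)
      = - Aform n (path_part n f) (path_part n f)"
    by (simp add: fan_distance_form power2_eq_square)
  show "(\<Sum>x\<in>fan_V n. (f x)\<^sup>2) = Jform n (path_part n f) (path_part n f)"
    using f_Inl by (simp add: sum_fan_V Jform_def power2_eq_square path_part_def)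
qed

lemma path_part_case_sum:
  assumes "path_supported n g"
  shows "path_part n (case_sum h g) = g"
  using assms by (auto simp: path_part_def path_supported_def fun_eq_iff)

lemma QEC_fan:
  assumes "n \<ge> 1"
  shows "QEC (fan_V n) fan_E = - rq_min n"
proof -
  let ?val = "\<lambda>f. \<Sum>x\<in>fan_V n. \<Sum>y\<in>fan_V n. f x * real (gdist (fan_V n) fan_E x y) * f y"
  let ?S = "{?val f | f. (\<Sum>x\<in>fan_V n. (f x)\<^sup>2) = 1 \<and> (\<Sum>x\<in>fan_V n. f x) = 0}"
  have "v \<le> - rq_min n" if "v \<in> ?S" for v
  proof -
    obtain f where "v = ?val f" "(\<Sum>x\<in>fan_V n. (f x)\<^sup>2) = 1" "(\<Sum>x\<in>fan_V n. f x) = 0"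
      using \<open>v \<in> ?S\<close> by blast
    then show ?thesis
      using fan_forms_zero_sum[of f n] rq_min_le[OF path_part_supported, of n f] by simp
  qed
  moreover have "- rq_min n \<in> ?S"
  proof -
    obtain g where g: "path_supported n g" "Jform n g g = 1" "Aform n g g = rq_min n"
      using rq_min_attained[OF assms] .
    define f :: "unit + nat \<Rightarrow> real" where "f = case_sum (\<lambda>_. - psum n g) g"
    have "path_part n f = g"
      unfolding f_def using g(1) by (rule path_part_case_sum)
    moreover have "(\<Sum>x\<in>fan_V n. f x) = 0"
      using \<open>path_part n f = g\<close> by (simp add: sum_fan_V f_def psum_def)
    ultimately have "?val f = - rq_min n" "(\<Sum>x\<in>fan_V n. (f x)\<^sup>2) = 1"
      using fan_forms_zero_sum[of f n] g by auto
    then show ?thesis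
      using \<open>(\<Sum>x\<in>fan_V n. f x) = 0\<close> by (metis (mono_tags, lifting) mem_Collect_eq)
  qed
  ultimately have "Sup ?S = - rq_min n"
    by (intro cSup_eq_maximum)
  then show ?thesis
    by (simp add: QEC_def)
qed

section \<open>The least eigenvalue of the path and the bounds on \<open>\<lambda>\<close>\<close>

lemma evA_tildeU_root:
  assumes "\<mu> \<in> evA n"
  shows "tildeU n \<mu> = 0"
proof -
  obtain v where nz: "\<exists>i\<in>{1..n}. v i \<noteq> 0"
    and ev: "\<And>i. i \<in> {1..n} \<Longrightarrow> (\<Sum>j\<in>{1..n}. adjA i j * v j) = \<mu> * v i"
    using assms unfolding evA_def by blast
  define w where "w k = (if k \<in> {1..n} then v k else 0)" for k
  have w: "path_supported n w"
    by (simp add: w_def path_supported_def)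
  have "w (i - 1) + w (i + 1) = \<mu> * w i + 0" if "i \<in> {1..n}" for i
  proof -
    have "(\<Sum>j\<in>{1..n}. adjA i j * w j) = (\<Sum>j\<in>{1..n}. adjA i j * v j)"
      by (intro sum.cong) (auto simp: w_def)
    then have "w (i - 1) + w (i + 1) = \<mu> * v i"
      using ev[OF that] adjA_mult_supported[OF w that] by linarith
    moreover have "w i = v i"
      using that by (simp add: w_def)
    ultimately show ?thesis
      by simp
  qed
  note sol = path_recurrence_solution[OF w this]
  have "w 1 \<noteq> 0"
  proof
    assume "w 1 = 0"
    then have "w = (\<lambda>_. 0)"
      using sol(2) by (metis cheb_vec_0_0)
    moreover obtain i where "i \<in> {1..n}" "v i \<noteq> 0"
      using nz by blast
    then have "w i \<noteq> 0"
      by (simp add: w_def)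
    ultimately show False
      by simp
  qed
  then show ?thesis
    using sol(1) by simp
qed

lemma ev_min_eigenvector:
  assumes "n \<ge> 1" "i \<in> {1..n}"
  shows "cheb_vec n 1 0 (ev_min n) (i - 1) + cheb_vec n 1 0 (ev_min n) (i + 1)
    = ev_min n * cheb_vec n 1 0 (ev_min n) i"
  using cheb_vec_recurrence[of 1 n "ev_min n" 0 i] tildeU_ev_min[OF assms(1)] assms(2) by simp

lemma ev_min_in_evA:
  assumes "n \<ge> 1"
  shows "ev_min n \<in> evA n"
proof -
  let ?v = "cheb_vec n 1 0 (ev_min n)"
  have "(\<Sum>j\<in>{1..n}. adjA i j * ?v j) = ev_min n * ?v i" if "i \<in> {1..n}" for i
    unfolding adjA_mult_supported[OF cheb_vec_supported that] by (rule ev_min_eigenvector[OF assms that])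
  moreover have "?v 1 \<noteq> 0" "1 \<in> {1..n}"
    using cheb_vec_1[OF assms] assms by simp_all
  ultimately show ?thesis
    unfolding evA_def by blast
qed

lemma Min_evA:
  assumes "n \<ge> 1"
  shows "Min (evA n) = ev_min n"
proof (rule Min_eqI)
  have "evA n \<subseteq> {x. tildeU n x = 0}"
    using evA_tildeU_root by blast
  then show "finite (evA n)"
    using finite_tildeU_roots by (rule finite_subset)
  show "ev_min n \<in> evA n"
    using assms by (rule ev_min_in_evA)
  show "ev_min n \<le> \<mu>" if "\<mu> \<in> evA n" for \<mu>
  proof (rule ccontr)
    assume "\<not> ev_min n \<le> \<mu>"
    then show False
      using tildeU_sign_below_ev_min[of \<mu> n] evA_tildeU_root[OF that] by simp
  qed
qed

lemma USum_ev_min_eq_0_iff: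
  assumes "n \<ge> 1"
  shows "USum n (ev_min n) = 0 \<longleftrightarrow> even n"
proof -
  obtain m where n: "n = Suc m"
    using assms by (cases n) auto
  define \<mu> where "\<mu> = ev_min n"
  have "tildeU n \<mu> = 0"
    using tildeU_ev_min[OF assms] by (simp add: \<mu>_def)
  then have "(tildeU m \<mu>)\<^sup>2 = 1"
    using tildeU_cassini[of m \<mu>] by (simp add: n)
  moreover have "0 < (-1) ^ m * tildeU m \<mu>"
    using tildeU_sign_below_ev_min ev_min_Suc_less[of m] by (simp add: n \<mu>_def)
  ultimately have "tildeU m \<mu> = (-1) ^ m"
    by (cases "even m") (auto simp: power2_eq_1_iff)
  then have "(\<mu> - 2) * USum n \<mu> = -1 - (-1) ^ m"
    using USum_closed_form[of \<mu> m] \<open>tildeU n \<mu> = 0\<close> by (simp add: n)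
  moreover have "\<mu> - 2 \<noteq> 0"
    using ev_min_less_2[OF assms] by (simp add: \<mu>_def)
  ultimately show ?thesis
    by (cases "even m") (auto simp: n \<mu>_def)
qed

lemma rq_min_le_ev_min:
  assumes "n \<ge> 1"
  shows "rq_min n \<le> ev_min n + 2" and "odd n \<Longrightarrow> rq_min n < ev_min n + 2"
proof -
  define v where "v = cheb_vec n 1 0 (ev_min n)"
  define Q where "Q = (\<Sum>i\<in>{1..n}. (v i)\<^sup>2)"
  define S where "S = (USum n (ev_min n))\<^sup>2"
  have v: "path_supported n v"
    by (simp add: v_def cheb_vec_supported)
  have "0 < Q"
    unfolding Q_def using assms cheb_vec_1[OF assms]
    by (intro sum_pos2[of _ 1]) (auto simp: v_def)
  have "psum n v = USum n (ev_min n)"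
    by (simp add: v_def psum_cheb_vec)
  then have "Jform n v v = Q + S"
    by (simp add: Jform_def Q_def S_def power2_eq_square)
  moreover have "v (i - 1) + 2 * v i + v (i + 1) = (ev_min n + 2) * v i + 0" if "i \<in> {1..n}" for i
    using ev_min_eigenvector[OF assms that] by (simp add: v_def algebra_simps)
  then have "Aform n v v = (ev_min n + 2) * Q + 0 * psum n v"
    unfolding Q_def by (rule Aform_eigen[OF v])
  ultimately have bound: "rq_min n * (Q + S) \<le> (ev_min n + 2) * Q"
    using rq_min_le[OF v] by simp
  have "0 < ev_min n + 2" "0 \<le> S"
    using ev_min_gt_minus2[of n] by (simp_all add: S_def)
  then have "(ev_min n + 2) * Q \<le> (ev_min n + 2) * (Q + S)"
    by (intro mult_left_mono) auto
  then have "rq_min n * (Q + S) \<le> (ev_min n + 2) * (Q + S)"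
    using bound by linarith
  then show "rq_min n \<le> ev_min n + 2"
    by (rule mult_right_le_imp_le) (use \<open>0 < Q\<close> \<open>0 \<le> S\<close> in simp)
  show "rq_min n < ev_min n + 2" if "odd n"
  proof -
    have "0 < S"
      using USum_ev_min_eq_0_iff[OF assms] that by (simp add: S_def)
    then have "(ev_min n + 2) * Q < (ev_min n + 2) * (Q + S)"
      using \<open>0 < ev_min n + 2\<close> by (intro mult_strict_left_mono) auto
    then have "rq_min n * (Q + S) < (ev_min n + 2) * (Q + S)"
      using bound by linarith
    then show ?thesis
      by (rule mult_right_less_imp_less) (use \<open>0 < Q\<close> \<open>0 < S\<close> in simp)
  qed
qed

lemma ev_min_le_rq_min:
  assumes "n \<ge> 2" "even n"
  shows "ev_min n \<le> rq_min n - 2"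
proof (rule ccontr)
  define x where "x = rq_min n - 2"
  assume "\<not> ev_min n \<le> rq_min n - 2"
  then have "x < ev_min n"
    by (simp add: x_def)
  have "Phi n x = 0"
    using Phi_rq_min assms(1) by (simp add: x_def)
  have "n = 2 \<or> n \<ge> 4"
    using assms by presburger
  then consider "x \<le> -2" | "-2 < x" "n = 2" | "-2 < x" "n \<ge> 4"
    by fastforce
  then show False
  proof cases
    case 1
    then show False
      using Phi_sign_le_minus2[of n x] assms(1) \<open>Phi n x = 0\<close> by simp
  next
    case 2
    then show False
      using \<open>Phi n x = 0\<close> \<open>x < ev_min n\<close> by (simp add: Phi_2 ev_min_2)
  next
    case 3
    then show False
      using Phi_pos_below_ev_min[of n x] assms(2) \<open>x < ev_min n\<close> \<open>Phi n x = 0\<close> by simp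
  qed
qed

theorem theorem4p1:
  fixes n :: nat
  assumes "n \<ge> 1"
  shows "QEC (join_V K1_V (path_V n)) (join_E K1_E path_E) = - alpha_tilde n - 2
    \<and> (even n \<longrightarrow> n \<ge> 2 \<longrightarrow>
           alpha_tilde n = Min (evA n) \<and>
           QEC (join_V K1_V (path_V n)) (join_E K1_E path_E) = - Min (evA n) - 2 \<and>
           QEC (join_V K1_V (path_V n)) (join_E K1_E path_E) = - 4 * (sin (pi / (2 * (real n + 1))))\<^sup>2)
    \<and> (odd n \<longrightarrow>
           Min (evA (n + 1)) \<le> alpha_tilde n \<and> alpha_tilde n < Min (evA n) \<and>
           - 4 * (sin (pi / (2 * (real n + 1))))\<^sup>2 < QEC (join_V K1_V (path_V n)) (join_E K1_E path_E) \<and>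
           QEC (join_V K1_V (path_V n)) (join_E K1_E path_E) \<le> - 4 * (sin (pi / (2 * (real n + 2))))\<^sup>2)"
proof -
  have alpha: "alpha_tilde n = rq_min n - 2"
    using alpha_tilde_eq_rq_min[OF assms] .
  have QEC: "QEC (join_V K1_V (path_V n)) (join_E K1_E path_E) = - alpha_tilde n - 2"
    using QEC_fan[OF assms] alpha by simp
  have sin_n: "- 4 * (sin (pi / (2 * (real n + 1))))\<^sup>2 = - ev_min n - 2"
    using ev_min_eq_sin[of n] by simp
  have "real (n + 1) + 1 = real n + 2"
    by simp
  then have sin_Suc_n: "- 4 * (sin (pi / (2 * (real n + 2))))\<^sup>2 = - ev_min (n + 1) - 2"
    using ev_min_eq_sin[of "n + 1"] by (simp only:)
  have even_case: "alpha_tilde n = ev_min n" if "even n" "n \<ge> 2"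
    using ev_min_le_rq_min[OF that(2,1)] rq_min_le_ev_min(1)[OF assms] alpha by simp
  have odd_case: "ev_min (n + 1) \<le> alpha_tilde n \<and> alpha_tilde n < ev_min n" if "odd n"
    using ev_min_le_rq_min[of "n + 1"] rq_min_Suc_le[OF assms] rq_min_le_ev_min(2)[OF assms that]
      alpha assms that by simp
  show ?thesis
    using QEC even_case odd_case sin_n sin_Suc_n Min_evA[OF assms] Min_evA[of "n + 1"] by simp
qed

end
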